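(* Let $\mathcal{H}=(\mathcal{T},\mathsf{SO})$ be a history and let $\mathcal{G}$ be the hyper-polygraph of $\mathcal{H}$. Then $\mathcal{H}$ satisfies Snapshot Isolation if and only if $\mathcal{H}$ satisfies $\textsc{Int}$ and there exists a directed labeled graph compatible with $\mathcal{G}$ whose induced SI graph is acyclic.
   Context: Fix sets $\mathsf{Key}$ of keys and $\mathsf{Val}$ of values. An operation is a read $\mathsf{R}(x,v)$ or write $\mathsf{W}(x,v)$ ($x\in\mathsf{Key}$, $v\in\mathsf{Val}$, each with a unique identifier). A transaction is $(O,\mathsf{po})$ with $O$ a finite non-empty set of operations and $\mathsf{po}$ a strict total order on $O$. A history $\mathcal{H}=(\mathcal{T},\mathsf{SO})$: $\mathcal{T}$ a set of transactions with disjoint operation sets, $\mathsf{SO}$ a union of strict total orders on disjoint subsets of $\mathcal{T}$; it contains a transaction $T_\bot$ writing the initial value of every key and $\mathsf{SO}$-preceding all other transactions. $T\vdash\mathsf{W}(x,v)$: $T$ writes $x$ and its $\mathsf{po}$-last write to $x$ has value $v$. $T\vdash\mathsf{R}(x,v)$: $T$ reads $x$ before any write of $T$ to $x$ and the first such read returns $v$. $\mathsf{WriteTx}_x=\{T\mid T\vdash\mathsf{W}(x,\_)\}$. $\textsc{Int}$: in every transaction, every read of $x$ that is $\mathsf{po}$-preceded by an operation on $x$ returns the value of the $\mathsf{po}$-latest such preceding operation. Dependency graph: $(\mathcal{T},\mathsf{SO},\mathsf{WR},\mathsf{WW},\mathsf{RW})$ with, for each key $x$: $\mathsf{WR}(x)\subseteq\mathcal{T}\times\mathcal{T}$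 such that every $S$ with $S\vdash\mathsf{R}(x,\_)$ has exactly one $T$ with $(T,S)\in\mathsf{WR}(x)$, and $(T,S)\in\mathsf{WR}(x)$ implies $T\neq S$ and $T\vdash\mathsf{W}(x,v)$, $S\vdash\mathsf{R}(x,v)$ for some $v$; $\mathsf{WW}(x)$ a strict total order on $\mathsf{WriteTx}_x$; $(T,S)\in\mathsf{RW}(x)$ iff $T\neq S$ and there is $T'$ with $(T',T)\in\mathsf{WR}(x)$ and $(T',S)\in\mathsf{WW}(x)$. Snapshot Isolation is taken (following Cerone and Gotsman) as: $\mathcal{H}$ satisfies SI iff $\mathcal{H}\models\textsc{Int}$ and there is a dependency graph extending $\mathcal{H}$ such that $(\mathsf{SO}\cup\mathsf{WR}\cup\mathsf{WW})\,;\,\mathsf{RW}^{?}$ is acyclic, where $\mathsf{WR},\mathsf{WW},\mathsf{RW}$ denote unions over keys, $;$ is relational composition and $R^{?}$ is the reflexive closure. Hyper-polygraph of $\mathcal{H}$: $\mathcal{G}=(\mathcal{V},\mathcal{E},(\mathcal{C}^{\mathsf{WW}},\mathcal{C}^{\mathsf{WR}}))$, $\mathcal{V}=\mathcal{T}$; edges $T\xrightarrow{\mathsf{t}(x)}S$ with type $\mathsf{t}\in\{\mathsf{SO},\mathsf{WR},\mathsf{WW},\mathsf{RW}\}$ and key $x$; $\mathcal{E}$ contains $T\xrightarrow{\mathsf{SO}}S$ for $(T,S)\in\mathsf{SO}$ and $T\xrightarrow{\mathsf{WR}(x)}S$ whenever $S\vdash\mathsf{R}(x,v)$ and $T$ is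 the unique transaction with $T\vdash\mathsf{W}(x,v)$; $\mathcal{C}^{\mathsf{WW}}=\{\{T\xrightarrow{\mathsf{WW}(x)}S,S\xrightarrow{\mathsf{WW}(x)}T\}\mid T\neq S\in\mathsf{WriteTx}_x\}$; $\mathcal{C}^{\mathsf{WR}}=\{\{T_i\xrightarrow{\mathsf{WR}(x)}S\mid T_i\vdash\mathsf{W}(x,v)\}\mid S\vdash\mathsf{R}(x,v)\}$. A graph $(\mathcal{V}',\mathcal{E}')$ is compatible with $\mathcal{G}$ if $\mathcal{V}'=\mathcal{V}$, $\mathcal{E}'\supseteq\mathcal{E}$, for all $x$ and $T,T',S$ with $T\neq S$: $T'\xrightarrow{\mathsf{WR}(x)}T\in\mathcal{E}'$ and $T'\xrightarrow{\mathsf{WW}(x)}S\in\mathcal{E}'$ imply $T\xrightarrow{\mathsf{RW}(x)}S\in\mathcal{E}'$, and $|\mathcal{E}'\cap C|=1$ for every $C\in\mathcal{C}^{\mathsf{WW}}\cup\mathcal{C}^{\mathsf{WR}}$. For such a graph, writing $\mathcal{E}'_{\mathsf{t}}\subseteq\mathcal{V}'\times\mathcal{V}'$ for the vertex pairs joined by an edge of type $\mathsf{t}$ (ignoring keys), its induced SI graph is $(\mathcal{V}',(\mathcal{E}'_{\mathsf{SO}}\cup\mathcal{E}'_{\mathsf{WR}}\cup\mathcal{E}'_{\mathsf{WW}})\,;\,\mathcal{E}'^{?}_{\mathsf{RW}})$. Acyclic means no directed cycle (including self-loops). *)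

theory Defs
  imports Main
begin

text \<open>An operation is a read or a write of a key with a value, carrying a unique
identifier (the nat). Keys are the elements of the type 'k, values of the type 'v.\<close>
datatype ('k, 'v) op = Rd nat 'k 'v | Wr nat 'k 'v

fun op_key :: "('k, 'v) op \<Rightarrow> 'k" where
  "op_key (Rd _ x _) = x" | "op_key (Wr _ x _) = x"

fun op_val :: "('k, 'v) op \<Rightarrow> 'v" where
  "op_val (Rd _ _ v) = v" | "op_val (Wr _ _ v) = v"

fun is_rd :: "('k, 'v) op \<Rightarrow> bool" where
  "is_rd (Rd _ _ _) = True" | "is_rd (Wr _ _ _) = False"

fun is_wr :: "('k, 'v) op \<Rightarrow> bool" where
  "is_wr (Rd _ _ _) = False" | "is_wr (Wr _ _ _) = True"

text \<open>A transaction (O, po) is represented by the list of its operations in po order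
(a nonempty list without repetitions): O = set T and po = list order.\<close>
type_synonym ('k, 'v) txn = "('k, 'v) op list"

definition writes :: "('k, 'v) txn \<Rightarrow> 'k \<Rightarrow> 'v \<Rightarrow> bool" where
  "writes T x v \<longleftrightarrow>
     (let ws = filter (\<lambda>p. is_wr p \<and> op_key p = x) T in ws \<noteq> [] \<and> op_val (last ws) = v)"

definition reads :: "('k, 'v) txn \<Rightarrow> 'k \<Rightarrow> 'v \<Rightarrow> bool" where
  "reads T x v \<longleftrightarrow>
     (let rs = filter (\<lambda>p. is_rd p \<and> op_key p = x)
                 (takeWhile (\<lambda>p. \<not> (is_wr p \<and> op_key p = x)) T)
      in rs \<noteq> [] \<and> op_val (hd rs) = v)"

definition WriteTx :: "('k, 'v) txn set \<Rightarrow> 'k \<Rightarrow> ('k, 'v) txn set" where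
  "WriteTx Ts x = {T \<in> Ts. \<exists>v. writes T x v}"

definition history :: "('k, 'v) txn set \<Rightarrow> ('k, 'v) txn rel \<Rightarrow> bool" where
  "history Ts SO \<longleftrightarrow>
     (\<forall>T\<in>Ts. T \<noteq> [] \<and> distinct T) \<and>
     (\<forall>T\<in>Ts. \<forall>S\<in>Ts. T \<noteq> S \<longrightarrow> set T \<inter> set S = {}) \<and>
     (\<exists>Tbot\<in>Ts. (\<forall>x. \<exists>v. writes Tbot x v) \<and>
        (\<exists>Sess R. (\<forall>A\<in>Sess. A \<subseteq> Ts - {Tbot}) \<and>
           (\<forall>A\<in>Sess. \<forall>B\<in>Sess. A \<noteq> B \<longrightarrow> A \<inter> B = {}) \<and>
           (\<forall>A\<in>Sess. R A \<subseteq> A \<times> A \<and> strict_linear_order_on A (R A)) \<and>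
           SO = {(Tbot, T) | T. T \<in> Ts \<and> T \<noteq> Tbot} \<union> (\<Union>A\<in>Sess. R A)))"

definition Int_axiom :: "('k, 'v) txn set \<Rightarrow> bool" where
  "Int_axiom Ts \<longleftrightarrow>
     (\<forall>T\<in>Ts. \<forall>i j. j < i \<and> i < length T \<and> is_rd (T ! i) \<and>
        op_key (T ! j) = op_key (T ! i) \<and>
        (\<forall>k. j < k \<and> k < i \<longrightarrow> op_key (T ! k) \<noteq> op_key (T ! i))
        \<longrightarrow> op_val (T ! i) = op_val (T ! j))"

definition RW_of :: "('k \<Rightarrow> ('k, 'v) txn rel) \<Rightarrow> ('k \<Rightarrow> ('k, 'v) txn rel) \<Rightarrow> 'k \<Rightarrow> ('k, 'v) txn rel" where
  "RW_of WR WW x = {(T, S). T \<noteq> S \<and> (\<exists>T'. (T', T) \<in> WR x \<and> (T', S) \<in> WW x)}"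

definition dep_graph :: "('k, 'v) txn set \<Rightarrow> ('k \<Rightarrow> ('k, 'v) txn rel) \<Rightarrow> ('k \<Rightarrow> ('k, 'v) txn rel) \<Rightarrow> bool" where
  "dep_graph Ts WR WW \<longleftrightarrow>
     (\<forall>x. WR x \<subseteq> Ts \<times> Ts) \<and>
     (\<forall>x. \<forall>S\<in>Ts. (\<exists>v. reads S x v) \<longrightarrow> (\<exists>!T. (T, S) \<in> WR x)) \<and>
     (\<forall>x T S. (T, S) \<in> WR x \<longrightarrow> T \<noteq> S \<and> (\<exists>v. writes T x v \<and> reads S x v)) \<and>
     (\<forall>x. WW x \<subseteq> WriteTx Ts x \<times> WriteTx Ts x \<and> strict_linear_order_on (WriteTx Ts x) (WW x))"

definition SI :: "('k, 'v) txn set \<Rightarrow> ('k, 'v) txn rel \<Rightarrow> bool" where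
  "SI Ts SO \<longleftrightarrow> Int_axiom Ts \<and>
     (\<exists>WR WW. dep_graph Ts WR WW \<and>
        acyclic ((SO \<union> (\<Union>x. WR x) \<union> (\<Union>x. WW x)) O (\<Union>x. RW_of WR WW x)\<^sup>=))"

datatype 'k etype = ESO | EWR 'k | EWW 'k | ERW 'k

text \<open>A labeled edge T --t(x)--> S is the triple (T, t(x), S).\<close>
type_synonym ('k, 'v) edge = "('k, 'v) txn \<times> 'k etype \<times> ('k, 'v) txn"

record ('k, 'v) hyper_polygraph =
  hp_V :: "('k, 'v) txn set"
  hp_E :: "('k, 'v) edge set"
  hp_CWW :: "('k, 'v) edge set set"
  hp_CWR :: "('k, 'v) edge set set"

definition hyper_polygraph_of :: "('k, 'v) txn set \<Rightarrow> ('k, 'v) txn rel \<Rightarrow> ('k, 'v) hyper_polygraph" where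
  "hyper_polygraph_of Ts SO =
     \<lparr> hp_V = Ts,
       hp_E = {(T, ESO, S) | T S. (T, S) \<in> SO} \<union>
              {(T, EWR x, S) | T x S. S \<in> Ts \<and> (\<exists>v. reads S x v \<and>
                  T \<in> Ts \<and> writes T x v \<and> (\<forall>T'\<in>Ts. writes T' x v \<longrightarrow> T' = T))},
       hp_CWW = {{(T, EWW x, S), (S, EWW x, T)} | T S x.
                   T \<noteq> S \<and> T \<in> WriteTx Ts x \<and> S \<in> WriteTx Ts x},
       hp_CWR = {{(Ti, EWR x, S) | Ti. Ti \<in> Ts \<and> writes Ti x v} | S x v.
                   S \<in> Ts \<and> reads S x v} \<rparr>"

definition compatible :: "('k, 'v) hyper_polygraph \<Rightarrow> ('k, 'v) txn set \<times> ('k, 'v) edge set \<Rightarrow> bool" where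
  "compatible G VE \<longleftrightarrow>
     (case VE of (V', E') \<Rightarrow>
        V' = hp_V G \<and>
        (\<forall>(T, l, S)\<in>E'. T \<in> V' \<and> S \<in> V') \<and>
        hp_E G \<subseteq> E' \<and>
        (\<forall>x T T' S. T \<noteq> S \<and> (T', EWR x, T) \<in> E' \<and> (T', EWW x, S) \<in> E' \<longrightarrow> (T, ERW x, S) \<in> E') \<and>
        (\<forall>C \<in> hp_CWW G \<union> hp_CWR G. \<exists>!e. e \<in> E' \<inter> C))"

definition E_SO :: "('k, 'v) edge set \<Rightarrow> ('k, 'v) txn rel" where
  "E_SO E = {(T, S). (T, ESO, S) \<in> E}"
definition E_WR :: "('k, 'v) edge set \<Rightarrow> ('k, 'v) txn rel" where
  "E_WR E = {(T, S). \<exists>x. (T, EWR x, S) \<in> E}"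
definition E_WW :: "('k, 'v) edge set \<Rightarrow> ('k, 'v) txn rel" where
  "E_WW E = {(T, S). \<exists>x. (T, EWW x, S) \<in> E}"
definition E_RW :: "('k, 'v) edge set \<Rightarrow> ('k, 'v) txn rel" where
  "E_RW E = {(T, S). \<exists>x. (T, ERW x, S) \<in> E}"

definition induced_SI_graph :: "('k, 'v) txn set \<times> ('k, 'v) edge set \<Rightarrow> ('k, 'v) txn set \<times> ('k, 'v) txn rel" where
  "induced_SI_graph VE = (case VE of (V', E') \<Rightarrow>
     (V', (E_SO E' \<union> E_WR E' \<union> E_WW E') O (E_RW E')\<^sup>=))"

end

theory Submission
  imports Defs
begin

text \<open>A dependency graph
(WR, WW) becomes the labelled graph with one edge for each pair in SO, WR(x), WW(x) and RW(x):
the hyper-polygraph constraints hold because every read has exactly one WR-writer and WW(x) is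
total and asymmetric, and its induced SI graph is literally the SI relation. Conversely, WR(x)
and WW(x) are read off the labelled edges of a compatible graph: the constraints pick one writer
for every read and one direction for every pair of writers, acyclicity of the induced SI graph
makes each WW(x) a strict total order, and the RW-closure of compatible graphs puts the SI
relation of this dependency graph inside the induced SI graph.\<close>

definition SI_rel ::
  "('k, 'v) txn rel \<Rightarrow> ('k \<Rightarrow> ('k, 'v) txn rel) \<Rightarrow> ('k \<Rightarrow> ('k, 'v) txn rel) \<Rightarrow> ('k, 'v) txn rel" where
  "SI_rel SO WR WW = (SO \<union> (\<Union>x. WR x) \<union> (\<Union>x. WW x)) O (\<Union>x. RW_of WR WW x)\<^sup>="

lemma SI_iff_SI_rel:
  "SI Ts SO \<longleftrightarrow> Int_axiom Ts \<and> (\<exists>WR WW. dep_graph Ts WR WW \<and> acyclic (SI_rel SO WR WW))"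
  by (simp add: SI_def SI_rel_def)

lemma snd_induced_SI_graph:
  "snd (induced_SI_graph (V, E)) = (E_SO E \<union> E_WR E \<union> E_WW E) O (E_RW E)\<^sup>="
  by (simp add: induced_SI_graph_def)

lemma history_SO_subset: "history Ts SO \<Longrightarrow> SO \<subseteq> Ts \<times> Ts"
  unfolding history_def by blast

lemma reads_functional: "reads S x v \<Longrightarrow> reads S x w \<Longrightarrow> v = w"
  by (simp add: reads_def Let_def)

lemma ex1_Int_doubleton_iff: "a \<noteq> b \<Longrightarrow> (\<exists>!e. e \<in> E \<inter> {a, b}) \<longleftrightarrow> (a \<in> E \<longleftrightarrow> b \<notin> E)"
  by blast

lemma ex1_Int_image_iff: "inj f \<Longrightarrow> (\<exists>!e. e \<in> E \<inter> {f t | t. P t}) \<longleftrightarrow> (\<exists>!t. f t \<in> E \<and> P t)"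
  unfolding inj_def by blast

lemma subset_relcomp_reflcl: "r \<subseteq> r O s\<^sup>="
  using relcomp_mono[OF subset_refl Un_upper2, of r Id s] by simp

lemma acyclic_no_loop: "acyclic r \<Longrightarrow> (a, a) \<notin> r"
  unfolding acyclic_def using r_into_trancl by metis

lemma strict_linear_order_on_if_total_acyclic:
  assumes sub: "r \<subseteq> A \<times> A" and total: "total_on A r" and acyc: "acyclic r"
  shows "strict_linear_order_on A r"
proof -
  have no_cycle: "(a, a) \<notin> r\<^sup>+" for a
    using acyc by (simp add: acyclic_def)
  have "trans r"
  proof (rule transI)
    fix a b c
    assume ab: "(a, b) \<in> r" and bc: "(b, c) \<in> r"
    then have "(a, c) \<in> r\<^sup>+"
      by (blast intro: trancl_into_trancl2)
    then have "a \<noteq> c" and "(c, a) \<notin> r"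
      using no_cycle by (blast intro: trancl_into_trancl2)+
    moreover have "a \<in> A" "c \<in> A"
      using ab bc sub by auto
    ultimately show "(a, c) \<in> r"
      using total by (auto simp: total_on_def)
  qed
  moreover have "irrefl r"
    using no_cycle by (auto simp: irrefl_def)
  ultimately show ?thesis
    using total by (simp add: strict_linear_order_on_def)
qed

lemma strict_linear_order_on_not_sym:
  "strict_linear_order_on A r \<Longrightarrow> (a, b) \<in> r \<Longrightarrow> (b, a) \<notin> r"
  unfolding strict_linear_order_on_def irrefl_def trans_def by blast

definition dep_graph_edges ::
  "('k, 'v) txn rel \<Rightarrow> ('k \<Rightarrow> ('k, 'v) txn rel) \<Rightarrow> ('k \<Rightarrow> ('k, 'v) txn rel) \<Rightarrow> ('k, 'v) edge set" where
  "dep_graph_edges SO WR WW =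
     {(T, ESO, S) | T S. (T, S) \<in> SO} \<union> {(T, EWR x, S) | T x S. (T, S) \<in> WR x} \<union>
     {(T, EWW x, S) | T x S. (T, S) \<in> WW x} \<union> {(T, ERW x, S) | T x S. (T, S) \<in> RW_of WR WW x}"

lemma mem_dep_graph_edges [simp]:
  "(T, ESO, S) \<in> dep_graph_edges SO WR WW \<longleftrightarrow> (T, S) \<in> SO"
  "(T, EWR x, S) \<in> dep_graph_edges SO WR WW \<longleftrightarrow> (T, S) \<in> WR x"
  "(T, EWW x, S) \<in> dep_graph_edges SO WR WW \<longleftrightarrow> (T, S) \<in> WW x"
  "(T, ERW x, S) \<in> dep_graph_edges SO WR WW \<longleftrightarrow> (T, S) \<in> RW_of WR WW x"
  by (auto simp: dep_graph_edges_def)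

lemma induced_SI_graph_dep_graph_edges:
  "snd (induced_SI_graph (V, dep_graph_edges SO WR WW)) = SI_rel SO WR WW"
proof -
  have "E_SO (dep_graph_edges SO WR WW) = SO" "E_WR (dep_graph_edges SO WR WW) = (\<Union>x. WR x)"
    "E_WW (dep_graph_edges SO WR WW) = (\<Union>x. WW x)"
    "E_RW (dep_graph_edges SO WR WW) = (\<Union>x. RW_of WR WW x)"
    by (auto simp: E_SO_def E_WR_def E_WW_def E_RW_def)
  then show ?thesis
    by (simp add: snd_induced_SI_graph SI_rel_def)
qed

lemma dep_graph_WR_writes:
  assumes "dep_graph Ts WR WW" and "(T, S) \<in> WR x" and "reads S x v"
  shows "T \<in> Ts" and "writes T x v"
proof -
  from assms(1,2) obtain w where "T \<in> Ts" "writes T x w" "reads S x w"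
    unfolding dep_graph_def by blast
  with assms(3) show "T \<in> Ts" "writes T x v"
    using reads_functional by metis+
qed

lemma dep_graph_unique_writer:
  assumes dg: "dep_graph Ts WR WW" and "S \<in> Ts" and rd: "reads S x v"
  shows "\<exists>!T. (T, S) \<in> WR x \<and> T \<in> Ts \<and> writes T x v"
proof -
  have "\<exists>!T. (T, S) \<in> WR x"
    using assms unfolding dep_graph_def by blast
  then show ?thesis
    using dep_graph_WR_writes[OF dg _ rd] by blast
qed

lemma hp_E_subset_dep_graph_edges:
  assumes dg: "dep_graph Ts WR WW"
  shows "hp_E (hyper_polygraph_of Ts SO) \<subseteq> dep_graph_edges SO WR WW"
proof
  fix e assume "e \<in> hp_E (hyper_polygraph_of Ts SO)"
  then consider (SO_edge) T S where "e = (T, ESO, S)" "(T, S) \<in> SO"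
    | (WR_edge) T x S v where "e = (T, EWR x, S)" "S \<in> Ts" "reads S x v" "T \<in> Ts" "writes T x v"
        "\<forall>T'\<in>Ts. writes T' x v \<longrightarrow> T' = T"
    unfolding hyper_polygraph_of_def hyper_polygraph.simps by blast
  then show "e \<in> dep_graph_edges SO WR WW"
  proof cases
    case SO_edge
    then show ?thesis by simp
  next
    case WR_edge
    obtain T' where "(T', S) \<in> WR x" "T' \<in> Ts" "writes T' x v"
      using dep_graph_unique_writer[OF dg WR_edge(2,3)] by blast
    moreover from this have "T' = T"
      using WR_edge(6) by blast
    ultimately show ?thesis
      using WR_edge(1) by simp
  qed
qed

lemma dep_graph_edges_exactly_one:
  assumes dg: "dep_graph Ts WR WW"
    and "C \<in> hp_CWW (hyper_polygraph_of Ts SO) \<union> hp_CWR (hyper_polygraph_of Ts SO)"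
  shows "\<exists>!e. e \<in> dep_graph_edges SO WR WW \<inter> C"
proof -
  from assms(2) consider (WW_pair) T S x where "C = {(T, EWW x, S), (S, EWW x, T)}"
      "T \<noteq> S" "T \<in> WriteTx Ts x" "S \<in> WriteTx Ts x"
    | (WR_choice) S x v where "C = {(Ti, EWR x, S) | Ti. Ti \<in> Ts \<and> writes Ti x v}"
        "S \<in> Ts" "reads S x v"
    unfolding hyper_polygraph_of_def hyper_polygraph.simps by blast
  then show ?thesis
  proof cases
    case WW_pair
    have order: "strict_linear_order_on (WriteTx Ts x) (WW x)"
      using dg unfolding dep_graph_def by blast
    then have "(T, S) \<in> WW x \<or> (S, T) \<in> WW x"
      using WW_pair(2-4) unfolding strict_linear_order_on_def total_on_def by blast
    then show ?thesis
      unfolding WW_pair(1) using strict_linear_order_on_not_sym[OF order] WW_pair(2)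
      by (subst ex1_Int_doubleton_iff) auto
  next
    case WR_choice
    have "\<exists>!T. (T, S) \<in> WR x \<and> T \<in> Ts \<and> writes T x v"
      using dep_graph_unique_writer[OF dg WR_choice(2,3)] .
    then show ?thesis
      unfolding WR_choice(1) by (subst ex1_Int_image_iff) (auto simp: inj_def)
  qed
qed

lemma compatible_dep_graph_edges:
  assumes SO: "SO \<subseteq> Ts \<times> Ts" and dg: "dep_graph Ts WR WW"
  shows "compatible (hyper_polygraph_of Ts SO) (Ts, dep_graph_edges SO WR WW)"
proof -
  have "WR x \<subseteq> Ts \<times> Ts" "WW x \<subseteq> Ts \<times> Ts" for x
    using dg unfolding dep_graph_def WriteTx_def by blast+
  then have "\<forall>(T, l, S)\<in>dep_graph_edges SO WR WW. T \<in> Ts \<and> S \<in> Ts"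
    using SO unfolding dep_graph_edges_def RW_of_def by blast
  moreover have "(T, ERW x, S) \<in> dep_graph_edges SO WR WW"
    if "T \<noteq> S" "(T', EWR x, T) \<in> dep_graph_edges SO WR WW"
      "(T', EWW x, S) \<in> dep_graph_edges SO WR WW" for x T T' S
    using that by (auto simp: RW_of_def)
  moreover have "hp_V (hyper_polygraph_of Ts SO) = Ts"
    by (simp add: hyper_polygraph_of_def)
  ultimately show ?thesis
    using hp_E_subset_dep_graph_edges[OF dg] dep_graph_edges_exactly_one[OF dg]
    unfolding compatible_def prod.case by blast
qed

text \<open>A compatible graph may carry WR and WW edges outside every constraint; they are discarded.\<close>

definition WR_of_edges :: "('k, 'v) txn set \<Rightarrow> ('k, 'v) edge set \<Rightarrow> 'k \<Rightarrow> ('k, 'v) txn rel" where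
  "WR_of_edges Ts E x =
     {(T, S). (T, EWR x, S) \<in> E \<and> T \<in> Ts \<and> S \<in> Ts \<and> (\<exists>v. writes T x v \<and> reads S x v)}"

definition WW_of_edges :: "('k, 'v) txn set \<Rightarrow> ('k, 'v) edge set \<Rightarrow> 'k \<Rightarrow> ('k, 'v) txn rel" where
  "WW_of_edges Ts E x = {(T, S). (T, EWW x, S) \<in> E} \<inter> WriteTx Ts x \<times> WriteTx Ts x"

lemma compatible_exactly_one:
  "compatible G (V, E) \<Longrightarrow> C \<in> hp_CWW G \<union> hp_CWR G \<Longrightarrow> \<exists>!e. e \<in> E \<inter> C"
  by (simp add: compatible_def)

lemma compatible_E_subset: "compatible G (V, E) \<Longrightarrow> hp_E G \<subseteq> E"
  by (simp add: compatible_def)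

lemma compatible_RW_closed:
  "compatible G (V, E) \<Longrightarrow> T \<noteq> S \<Longrightarrow> (T', EWR x, T) \<in> E \<Longrightarrow> (T', EWW x, S) \<in> E \<Longrightarrow>
    (T, ERW x, S) \<in> E"
  by (simp add: compatible_def)

lemma compatible_unique_WR_edge:
  assumes comp: "compatible (hyper_polygraph_of Ts SO) (V, E)" and "S \<in> Ts" and "reads S x v"
  shows "\<exists>!T. (T, EWR x, S) \<in> E \<and> T \<in> Ts \<and> writes T x v"
proof -
  have "{(Ti, EWR x, S) | Ti. Ti \<in> Ts \<and> writes Ti x v} \<in> hp_CWR (hyper_polygraph_of Ts SO)"
    using \<open>S \<in> Ts\<close> \<open>reads S x v\<close> unfolding hyper_polygraph_of_def by auto
  then have "\<exists>!e. e \<in> E \<inter> {(Ti, EWR x, S) | Ti. Ti \<in> Ts \<and> writes Ti x v}"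
    using compatible_exactly_one[OF comp] by blast
  then show ?thesis
    by (subst (asm) ex1_Int_image_iff) (auto simp: inj_def)
qed

lemma compatible_WW_edge_total:
  assumes comp: "compatible (hyper_polygraph_of Ts SO) (V, E)"
    and "T \<noteq> S" and "T \<in> WriteTx Ts x" and "S \<in> WriteTx Ts x"
  shows "(T, EWW x, S) \<in> E \<or> (S, EWW x, T) \<in> E"
proof -
  have "{(T, EWW x, S), (S, EWW x, T)} \<in> hp_CWW (hyper_polygraph_of Ts SO)"
    using assms(2-4) unfolding hyper_polygraph_of_def by auto
  then show ?thesis
    using compatible_exactly_one[OF comp] by blast
qed

lemma mem_WR_of_edges_iff:
  assumes "S \<in> Ts" and "reads S x v"
  shows "(T, S) \<in> WR_of_edges Ts E x \<longleftrightarrow> (T, EWR x, S) \<in> E \<and> T \<in> Ts \<and> writes T x v"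
  using assms reads_functional[OF assms(2)] unfolding WR_of_edges_def by blast

lemma WR_of_edges_unique:
  assumes "compatible (hyper_polygraph_of Ts SO) (V, E)" and "S \<in> Ts" and "reads S x v"
  shows "\<exists>!T. (T, S) \<in> WR_of_edges Ts E x"
  using compatible_unique_WR_edge[OF assms] by (simp only: mem_WR_of_edges_iff[OF assms(2,3)])

lemma edges_subset_induced_SI_graph:
  "E_SO E \<union> E_WR E \<union> E_WW E \<subseteq> snd (induced_SI_graph (V, E))"
  unfolding snd_induced_SI_graph by (rule subset_relcomp_reflcl)

lemma dep_graph_of_edges:
  assumes comp: "compatible (hyper_polygraph_of Ts SO) (V, E)"
    and acyc: "acyclic (snd (induced_SI_graph (V, E)))"
  shows "dep_graph Ts (WR_of_edges Ts E) (WW_of_edges Ts E)"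
proof -
  have "WR_of_edges Ts E x \<subseteq> E_WR E" "WW_of_edges Ts E x \<subseteq> E_WW E" for x
    unfolding WR_of_edges_def WW_of_edges_def E_WR_def E_WW_def by auto
  then have WR_acyclic: "acyclic (WR_of_edges Ts E x)" and WW_acyclic: "acyclic (WW_of_edges Ts E x)" for x
    using acyclic_subset[OF acyc] edges_subset_induced_SI_graph by (meson le_sup_iff order_trans)+
  have "strict_linear_order_on (WriteTx Ts x) (WW_of_edges Ts E x)" for x
  proof (rule strict_linear_order_on_if_total_acyclic)
    show "WW_of_edges Ts E x \<subseteq> WriteTx Ts x \<times> WriteTx Ts x"
      unfolding WW_of_edges_def by blast
    show "total_on (WriteTx Ts x) (WW_of_edges Ts E x)"
      using compatible_WW_edge_total[OF comp] unfolding total_on_def WW_of_edges_def by blast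
  qed (rule WW_acyclic)
  moreover have "(T, S) \<in> WR_of_edges Ts E x \<Longrightarrow> T \<noteq> S" for T S x
    using acyclic_no_loop[OF WR_acyclic] by blast
  ultimately show ?thesis
    using WR_of_edges_unique[OF comp]
    unfolding dep_graph_def WR_of_edges_def WW_of_edges_def by blast
qed

lemma SI_rel_of_edges_subset:
  assumes comp: "compatible (hyper_polygraph_of Ts SO) (V, E)"
  shows "SI_rel SO (WR_of_edges Ts E) (WW_of_edges Ts E) \<subseteq> snd (induced_SI_graph (V, E))"
proof -
  have SO: "SO \<subseteq> E_SO E"
    using compatible_E_subset[OF comp] unfolding hyper_polygraph_of_def E_SO_def by auto
  have WR: "(\<Union>x. WR_of_edges Ts E x) \<subseteq> E_WR E" and WW: "(\<Union>x. WW_of_edges Ts E x) \<subseteq> E_WW E"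
    unfolding WR_of_edges_def WW_of_edges_def E_WR_def E_WW_def by auto
  have RW: "(\<Union>x. RW_of (WR_of_edges Ts E) (WW_of_edges Ts E) x) \<subseteq> E_RW E"
    using compatible_RW_closed[OF comp]
    unfolding RW_of_def WR_of_edges_def WW_of_edges_def E_RW_def by blast
  show ?thesis
    unfolding SI_rel_def snd_induced_SI_graph
    using relcomp_mono[OF Un_mono[OF Un_mono[OF SO WR] WW] Un_mono[OF RW subset_refl]] .
qed

theorem theoremA2:
  fixes Ts :: "('k, 'v) txn set" and SO :: "('k, 'v) txn rel"
  assumes "history Ts SO"
  shows "SI Ts SO \<longleftrightarrow>
           Int_axiom Ts \<and>
           (\<exists>VE. compatible (hyper_polygraph_of Ts SO) VE \<and> acyclic (snd (induced_SI_graph VE)))"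
proof
  assume "SI Ts SO"
  then obtain WR WW where "Int_axiom Ts" "dep_graph Ts WR WW" "acyclic (SI_rel SO WR WW)"
    unfolding SI_iff_SI_rel by blast
  then show "Int_axiom Ts \<and>
      (\<exists>VE. compatible (hyper_polygraph_of Ts SO) VE \<and> acyclic (snd (induced_SI_graph VE)))"
    using compatible_dep_graph_edges[OF history_SO_subset[OF assms]]
      induced_SI_graph_dep_graph_edges by metis
next
  assume "Int_axiom Ts \<and>
      (\<exists>VE. compatible (hyper_polygraph_of Ts SO) VE \<and> acyclic (snd (induced_SI_graph VE)))"
  then obtain V E where "Int_axiom Ts" and comp: "compatible (hyper_polygraph_of Ts SO) (V, E)"
    and acyc: "acyclic (snd (induced_SI_graph (V, E)))"
    by (metis prod.collapse)
  then show "SI Ts SO"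
    unfolding SI_iff_SI_rel
    using dep_graph_of_edges[OF comp acyc] acyclic_subset[OF acyc SI_rel_of_edges_subset[OF comp]]
    by blast
qed

end
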